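(* The matrix $$U_5=\tfrac12 S_0\otimes\left(I_2\otimes I_2+\sigma_1\otimes\sigma_1+\sigma_2\otimes\sigma_2+\sigma_3\otimes\sigma_3\right)+S_3\otimes I_2\otimes\sigma_1$$ on $\mathbb{C}^2\otimes\mathbb{C}^2\otimes\mathbb{C}^2$ is unitary and $\mathrm{sr}(U_5)=5$.
   Context: $S_0=\begin{bmatrix}1&0\\0&0\end{bmatrix}$, $S_1=\begin{bmatrix}0&1\\0&0\end{bmatrix}$, $S_2=\begin{bmatrix}0&0\\1&0\end{bmatrix}$, $S_3=\begin{bmatrix}0&0\\0&1\end{bmatrix}$. $I_2$ is the $2\times2$ identity and $\sigma_1=\begin{bmatrix}0&1\\1&0\end{bmatrix}$, $\sigma_2=\begin{bmatrix}0&-i\\i&0\end{bmatrix}$, $\sigma_3=\begin{bmatrix}1&0\\0&-1\end{bmatrix}$ are the Pauli matrices. For a matrix $U$ on $\mathbb{C}^2\otimes\mathbb{C}^2\otimes\mathbb{C}^2$ (systems $A,B,C$), its Schmidt rank $\mathrm{sr}(U)$ is the least integer $r$ such that $U=\sum_{j=1}^r A_j\otimes B_j\otimes C_j$ with $A_j,B_j,C_j$ complex $2\times 2$ matrices (i.e. the tensor rank of $U$). *)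

theory Defs
  imports "HOL-Analysis.Analysis"
begin

type_synonym cmat2 = "complex ^ 2 ^ 2"
type_synonym cmat8 = "complex ^ (2 \<times> 2 \<times> 2) ^ (2 \<times> 2 \<times> 2)"

definition mat2 :: "complex \<Rightarrow> complex \<Rightarrow> complex \<Rightarrow> complex \<Rightarrow> cmat2" where
  "mat2 a b c d = (\<chi> i j. if i = 0 then (if j = 0 then a else b) else (if j = 0 then c else d))"

definition S0 :: cmat2 where "S0 = mat2 1 0 0 0"
definition S1 :: cmat2 where "S1 = mat2 0 1 0 0"
definition S2 :: cmat2 where "S2 = mat2 0 0 1 0"
definition S3 :: cmat2 where "S3 = mat2 0 0 0 1"
definition I2 :: cmat2 where "I2 = mat2 1 0 0 1"
definition sigma1 :: cmat2 where "sigma1 = mat2 0 1 1 0"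
definition sigma2 :: cmat2 where "sigma2 = mat2 0 (- \<i>) \<i> 0"
definition sigma3 :: cmat2 where "sigma3 = mat2 1 0 0 (-1)"

definition kron3 :: "cmat2 \<Rightarrow> cmat2 \<Rightarrow> cmat2 \<Rightarrow> cmat8" where
  "kron3 A B C = (\<chi> i j. A $ fst i $ fst j * B $ fst (snd i) $ fst (snd j)
                            * C $ snd (snd i) $ snd (snd j))"

definition cadj :: "complex ^ 'n ^ 'n \<Rightarrow> complex ^ 'n ^ 'n" where
  "cadj U = (\<chi> i j. cnj (U $ j $ i))"

definition unitary :: "complex ^ 'n ^ 'n \<Rightarrow> bool" where
  "unitary U \<longleftrightarrow> cadj U ** U = mat 1 \<and> U ** cadj U = mat 1"

text \<open>Schmidt rank = tensor rank over 2x2x2 complex matrices.\<close>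
definition sr :: "cmat8 \<Rightarrow> nat" where
  "sr U = (LEAST r. \<exists>A B C :: nat \<Rightarrow> cmat2. U = (\<Sum>j<r. kron3 (A j) (B j) (C j)))"

definition U5 :: cmat8 where
  "U5 = (1/2) *\<^sub>R kron3 S0 I2 I2 + (1/2) *\<^sub>R kron3 S0 sigma1 sigma1
      + (1/2) *\<^sub>R kron3 S0 sigma2 sigma2 + (1/2) *\<^sub>R kron3 S0 sigma3 sigma3
      + kron3 S3 I2 sigma1"

end

theory Submission imports Defs begin

text \<open>
  U5 is the permutation matrix of an involution, hence unitary, and the decomposition
  in its definition has five terms. For the lower bound, realign the two diagonal
  blocks (first factor in state 0 resp. 1) into 4x4 matrices P and N indexed by the
  second and third factors. A decomposition of U5 into r \<le> 4 product terms gives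
  simultaneous factorisations P = U D V and N = U E V with D, E diagonal 4x4 matrices
  (padding with zero terms). P is invertible, hence so are U, D and V, and then
  N P^-1 N = U (E^2 D^-1) V. For U5 one has N P^-1 N = 0, forcing E = 0 and N = 0,
  but N \<noteq> 0.
\<close>

lemma bit2_cases: "(x::2) = 0 \<or> x = 1"
  using exhaust_2[of x] by auto

lemma mat2_nth: "mat2 a b c d $ i $ j = (if i = 0 then (if j = 0 then a else b) else (if j = 0 then c else d))"
  by (simp add: mat2_def)

definition perm_mat :: "('n \<Rightarrow> 'n) \<Rightarrow> 'a::zero_neq_one^'n^'n" where
  "perm_mat f = (\<chi> x y. if y = f x then 1 else 0)"

definition diag_mat :: "('n \<Rightarrow> 'a::zero) \<Rightarrow> 'a^'n^'n" where
  "diag_mat d = (\<chi> i j. if i = j then d i else 0)"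

lemma involution_eq_iff:
  assumes "f \<circ> f = id"
  shows "f x = y \<longleftrightarrow> x = f y"
  using pointfree_idE[OF assms] by metis

lemma matrix_mul_perm_mat_involution:
  fixes X :: "'a::semiring_1^'n::finite^'m"
  assumes "f \<circ> f = id"
  shows "(X ** perm_mat f) $ p $ q = X $ p $ f q"
proof -
  have "(X ** perm_mat f) $ p $ q = (\<Sum>r\<in>UNIV. if r = f q then X $ p $ r else 0)"
    unfolding matrix_matrix_mult_def perm_mat_def vec_lambda_beta
    using involution_eq_iff[OF assms, of _ q] pointfree_idE[OF assms] by (intro sum.cong) auto
  then show ?thesis by simp
qed

lemma perm_mat_involution_square:
  assumes "f \<circ> f = id"
  shows "perm_mat f ** perm_mat f = (mat 1 :: 'a::semiring_1^'n::finite^'n)"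
proof -
  have "(perm_mat f ** perm_mat f) $ x $ y = (mat 1 :: 'a^'n^'n) $ x $ y" for x y
    unfolding matrix_mul_perm_mat_involution[OF assms]
    using pointfree_idE[OF assms] by (auto simp: perm_mat_def mat_def) metis
  then show ?thesis by (simp add: vec_eq_iff)
qed

lemma unitary_perm_mat_involution:
  assumes "f \<circ> f = id"
  shows "unitary (perm_mat f :: complex^'n::finite^'n)"
proof -
  have "cadj (perm_mat f) = (perm_mat f :: complex^'n^'n)"
    using involution_eq_iff[OF assms] by (auto simp: vec_eq_iff cadj_def perm_mat_def)
  then show ?thesis
    unfolding unitary_def using perm_mat_involution_square[OF assms] by simp
qed

lemma matrix_mul_diag_mat_left:
  fixes X :: "'a::semiring_1^'m^'n::finite"
  shows "(diag_mat d ** X) $ p $ q = d p * X $ p $ q"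
proof -
  have "(diag_mat d ** X) $ p $ q = (\<Sum>k\<in>UNIV. if k = p then d p * X $ k $ q else 0)"
    unfolding matrix_matrix_mult_def diag_mat_def vec_lambda_beta by (intro sum.cong) auto
  then show ?thesis by simp
qed

lemma matrix_mul_diag_mat_right:
  fixes X :: "'a::semiring_1^'n::finite^'m"
  shows "(X ** diag_mat d) $ p $ q = X $ p $ q * d q"
proof -
  have "(X ** diag_mat d) $ p $ q = (\<Sum>k\<in>UNIV. if k = q then X $ p $ q * d q else 0)"
    unfolding matrix_matrix_mult_def diag_mat_def vec_lambda_beta by (intro sum.cong) auto
  then show ?thesis by simp
qed

lemma diag_mat_eq_0_iff: "diag_mat d = 0 \<longleftrightarrow> d = (\<lambda>_. 0)"
  by (auto simp: diag_mat_def vec_eq_iff fun_eq_iff)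

lemma common_diag_factorisation_sandwich_zero:
  fixes U V P Q N :: "'a::field^'n::finite^'n"
  assumes P: "P = U ** diag_mat a ** V" and N: "N = U ** diag_mat b ** V"
    and inv: "Q ** P = mat 1" and sandwich: "N ** Q ** N = 0"
  shows "N = 0"
proof -
  \<comment> \<open>W is the inverse of diag_mat a, and N Q N = U (diag_mat b ** W ** diag_mat b) V.\<close>
  define W where "W = V ** Q ** U"
  have "U ** (diag_mat a ** V ** Q) = mat 1"
    using matrix_left_right_inverse inv unfolding P by (metis matrix_mul_assoc)
  then have U_linv: "(diag_mat a ** V ** Q) ** U = mat 1"
    using matrix_left_right_inverse by blast
  have "(Q ** U ** diag_mat a) ** V = mat 1"
    using inv unfolding P by (simp add: matrix_mul_assoc)
  then have V_rinv: "V ** (Q ** U ** diag_mat a) = mat 1"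
    using matrix_left_right_inverse by blast
  have W_diag: "diag_mat a ** W = mat 1"
    using U_linv unfolding W_def by (simp add: matrix_mul_assoc)
  have sandwich_W: "U ** (diag_mat b ** W ** diag_mat b) ** V = 0"
    using sandwich unfolding N W_def by (simp add: matrix_mul_assoc)
  have "diag_mat b ** W ** diag_mat b
      = ((diag_mat a ** V ** Q) ** U) ** (diag_mat b ** W ** diag_mat b) ** (V ** (Q ** U ** diag_mat a))"
    by (simp only: U_linv V_rinv matrix_mul_lid matrix_mul_rid)
  also have "\<dots> = (diag_mat a ** V ** Q) ** (U ** (diag_mat b ** W ** diag_mat b) ** V)
      ** (Q ** U ** diag_mat a)"
    by (simp only: matrix_mul_assoc)
  finally have core: "diag_mat b ** W ** diag_mat b = 0"
    by (simp add: sandwich_W)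
  have "b k = 0" for k
  proof -
    have "(diag_mat a ** W) $ k $ k = 1"
      using W_diag by (simp add: mat_def)
    then have "a k * W $ k $ k = 1"
      by (simp only: matrix_mul_diag_mat_left)
    moreover have "(diag_mat b ** W ** diag_mat b) $ k $ k = 0"
      using core by simp
    then have "b k * W $ k $ k * b k = 0"
      by (simp only: matrix_mul_diag_mat_left matrix_mul_diag_mat_right)
    ultimately show ?thesis by auto
  qed
  then have "diag_mat b = 0"
    by (simp add: diag_mat_eq_0_iff fun_eq_iff)
  then show ?thesis
    unfolding N by simp
qed

text \<open>Rows are indexed by entry positions (b,d) of the second factor, columns by entry
  positions (c,e) of the third, so that a product term kron3 A B C contributes
  A$i$i vec(B) vec(C)^T to the block of the first factor's diagonal entry i.\<close>
definition realigned_block :: "cmat8 \<Rightarrow> 2 \<Rightarrow> complex^(2 \<times> 2)^(2 \<times> 2)" where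
  "realigned_block M i = (\<chi> p q. M $ (i, fst p, fst q) $ (i, snd p, snd q))"

lemma realigned_block_sum_kron3:
  fixes A B C :: "'k::finite \<Rightarrow> cmat2"
  shows "realigned_block (\<Sum>k\<in>UNIV. kron3 (A k) (B k) (C k)) i
    = (\<chi> p k. B k $ fst p $ snd p) ** diag_mat (\<lambda>k. A k $ i $ i) ** (\<chi> k q. C k $ fst q $ snd q)"
    (is "_ = ?U ** ?D ** ?V")
proof -
  have "realigned_block (\<Sum>k\<in>UNIV. kron3 (A k) (B k) (C k)) i $ p $ q = (?U ** ?D ** ?V) $ p $ q"
    for p q
  proof -
    have "(?U ** ?D ** ?V) $ p $ q = (\<Sum>k\<in>UNIV. (?U ** ?D) $ p $ k * ?V $ k $ q)"
      by (simp only: matrix_matrix_mult_def[of "?U ** ?D" ?V] vec_lambda_beta)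
    also have "\<dots> = (\<Sum>k\<in>UNIV. A k $ i $ i * B k $ fst p $ snd p * C k $ fst q $ snd q)"
      by (simp add: matrix_mul_diag_mat_right mult.commute)
    finally show ?thesis
      by (simp add: realigned_block_def kron3_def sum_component)
  qed
  then show ?thesis by (simp add: vec_eq_iff)
qed

definition u5_perm :: "2 \<times> 2 \<times> 2 \<Rightarrow> 2 \<times> 2 \<times> 2" where
  "u5_perm = (\<lambda>(i, b, c). if i = 0 then (0, c, b) else (1, b, c + 1))"

lemma u5_perm_involution: "u5_perm \<circ> u5_perm = id"
proof
  fix x :: "2 \<times> 2 \<times> 2"
  obtain i b c where x: "x = (i, b, c)" by (cases x) auto
  show "(u5_perm \<circ> u5_perm) x = id x"
    unfolding x using bit2_cases[of i] bit2_cases[of c]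
    by (elim disjE) (auto simp: u5_perm_def)
qed

lemma pauli_sum_swap_entry:
  "(1/2) * (I2$b$d * I2$c$e) + (1/2) * (sigma1$b$d * sigma1$c$e) + (1/2) * (sigma2$b$d * sigma2$c$e)
   + (1/2) * (sigma3$b$d * sigma3$c$e) = (if d = c \<and> e = b then 1 else 0)"
  using bit2_cases[of b] bit2_cases[of c] bit2_cases[of d] bit2_cases[of e]
  by (elim disjE) (simp_all add: I2_def sigma1_def sigma2_def sigma3_def mat2_nth)

lemma identity_sigma1_entry: "I2$b$d * sigma1$c$e = (if d = b \<and> e = c + 1 then 1 else 0)"
  using bit2_cases[of b] bit2_cases[of c] bit2_cases[of d] bit2_cases[of e]
  by (elim disjE) (simp_all add: I2_def sigma1_def mat2_nth)

lemma U5_eq_perm_mat: "U5 = perm_mat u5_perm"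
proof -
  have "U5 $ (i, b, c) $ (k, d, e) = perm_mat u5_perm $ (i, b, c) $ (k, d, e)" for i b c k d e
  proof -
    have "U5 $ (i, b, c) $ (k, d, e) = S0$i$k * ((1/2) * (I2$b$d * I2$c$e)
        + (1/2) * (sigma1$b$d * sigma1$c$e) + (1/2) * (sigma2$b$d * sigma2$c$e)
        + (1/2) * (sigma3$b$d * sigma3$c$e)) + S3$i$k * (I2$b$d * sigma1$c$e)"
      unfolding U5_def
      by (simp only: vector_add_component vector_scaleR_component)
        (simp add: kron3_def scaleR_conv_of_real algebra_simps)
    then show ?thesis
      unfolding pauli_sum_swap_entry identity_sigma1_entry
      using bit2_cases[of i] bit2_cases[of k]
      by (elim disjE) (auto simp: perm_mat_def u5_perm_def S0_def S3_def mat2_nth)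
  qed
  then show ?thesis by (simp add: vec_eq_iff)
qed

lemma unitary_U5: "unitary U5"
  unfolding U5_eq_perm_mat by (rule unitary_perm_mat_involution[OF u5_perm_involution])

lemma realigned_block_U5_0: "realigned_block U5 0 = perm_mat prod.swap"
  by (simp add: vec_eq_iff realigned_block_def U5_eq_perm_mat perm_mat_def u5_perm_def prod_eq_iff)

lemma realigned_block_U5_1:
  "realigned_block U5 1 = (\<chi> p q. if fst p = snd p \<and> snd q = fst q + 1 then 1 else 0)"
  by (simp add: vec_eq_iff realigned_block_def U5_eq_perm_mat perm_mat_def u5_perm_def)

lemma realigned_block_U5_sandwich:
  "realigned_block U5 1 ** realigned_block U5 0 ** realigned_block U5 1 = 0"
proof -
  have summand_0: "(realigned_block U5 1 ** realigned_block U5 0) $ p $ r * realigned_block U5 1 $ r $ q = 0"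
    for p r q
    unfolding realigned_block_U5_0 matrix_mul_perm_mat_involution[OF swap_comp_swap]
    by (cases r) (auto simp: realigned_block_U5_1)
  have "(realigned_block U5 1 ** realigned_block U5 0 ** realigned_block U5 1) $ p $ q = 0" for p q
    unfolding matrix_matrix_mult_def[of "_ ** _" "realigned_block U5 1"] vec_lambda_beta
    using summand_0 by (intro sum.neutral) blast
  then show ?thesis by (simp add: vec_eq_iff)
qed

lemma U5_neq_sum_four_kron3:
  fixes A B C :: "2 \<times> 2 \<Rightarrow> cmat2"
  shows "U5 \<noteq> (\<Sum>k\<in>UNIV. kron3 (A k) (B k) (C k))"
proof
  assume U5_sum: "U5 = (\<Sum>k\<in>UNIV. kron3 (A k) (B k) (C k))"
  let ?U = "\<chi> p k. B k $ fst p $ snd p" and ?V = "\<chi> k q. C k $ fst q $ snd q"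
  have "realigned_block U5 1 = 0"
  proof (rule common_diag_factorisation_sandwich_zero)
    show "realigned_block U5 0 = ?U ** diag_mat (\<lambda>k. A k $ 0 $ 0) ** ?V"
      "realigned_block U5 1 = ?U ** diag_mat (\<lambda>k. A k $ 1 $ 1) ** ?V"
      unfolding U5_sum by (rule realigned_block_sum_kron3)+
    show "realigned_block U5 0 ** realigned_block U5 0 = mat 1"
      unfolding realigned_block_U5_0 by (rule perm_mat_involution_square[OF swap_comp_swap])
  qed (rule realigned_block_U5_sandwich)
  moreover have "realigned_block U5 1 $ (0, 0) $ (0, 1) = 1"
    by (simp add: realigned_block_U5_1)
  ultimately show False by simp
qed

lemma U5_neq_short_sum_kron3:
  fixes A B C :: "nat \<Rightarrow> cmat2"
  assumes "r \<le> 4"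
  shows "U5 \<noteq> (\<Sum>j<r. kron3 (A j) (B j) (C j))"
proof -
  define pair_code :: "2 \<times> 2 \<Rightarrow> nat"
    where "pair_code k = (if fst k = 0 then 0 else 2) + (if snd k = 0 then 0 else 1)" for k
  define A' where "A' j = (if j < r then A j else 0)" for j
  have UNIV_pairs: "(UNIV :: (2 \<times> 2) set) = {(0,0), (0,1), (1,0), (1,1)}"
    using bit2_cases by auto
  have sum_four: "(\<Sum>j<4. f j) = (\<Sum>k\<in>UNIV. f (pair_code k))" for f :: "nat \<Rightarrow> cmat8"
    by (simp add: UNIV_pairs pair_code_def eval_nat_numeral lessThan_Suc add_ac)
  have "(\<Sum>j<r. kron3 (A j) (B j) (C j)) = (\<Sum>j<r. kron3 (A' j) (B j) (C j))"
    by (simp add: A'_def)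
  also have "\<dots> = (\<Sum>j<4. kron3 (A' j) (B j) (C j))"
    using assms by (intro sum.mono_neutral_left) (auto simp: A'_def kron3_def vec_eq_iff)
  also have "\<dots> = (\<Sum>k\<in>UNIV. kron3 (A' (pair_code k)) (B (pair_code k)) (C (pair_code k)))"
    by (rule sum_four)
  finally show ?thesis
    using U5_neq_sum_four_kron3[of "\<lambda>k. A' (pair_code k)" "\<lambda>k. B (pair_code k)" "\<lambda>k. C (pair_code k)"] by argo
qed

lemma kron3_scaleR_left: "kron3 (c *\<^sub>R X) Y Z = c *\<^sub>R kron3 X Y Z"
  unfolding kron3_def by (simp add: vec_eq_iff vector_scaleR_component mult_scaleR_left)

lemma U5_eq_sum_five_kron3:
  "\<exists>A B C :: nat \<Rightarrow> cmat2. U5 = (\<Sum>j<5. kron3 (A j) (B j) (C j))"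
proof (intro exI)
  let ?A = "\<lambda>j. [(1/2) *\<^sub>R S0, (1/2) *\<^sub>R S0, (1/2) *\<^sub>R S0, (1/2) *\<^sub>R S0, S3] ! j"
  let ?B = "\<lambda>j. [I2, sigma1, sigma2, sigma3, I2] ! j"
  let ?C = "\<lambda>j. [I2, sigma1, sigma2, sigma3, sigma1] ! j"
  show "U5 = (\<Sum>j<5. kron3 (?A j) (?B j) (?C j))"
    by (simp add: U5_def eval_nat_numeral kron3_scaleR_left)
qed

theorem mainTheorem4:
  shows "unitary U5 \<and> sr U5 = 5"
proof
  show "unitary U5" by (rule unitary_U5)
  show "sr U5 = 5"
    unfolding sr_def
  proof (rule Least_equality)
    show "\<exists>A B C :: nat \<Rightarrow> cmat2. U5 = (\<Sum>j<5. kron3 (A j) (B j) (C j))"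
      by (rule U5_eq_sum_five_kron3)
    show "5 \<le> r" if "\<exists>A B C :: nat \<Rightarrow> cmat2. U5 = (\<Sum>j<r. kron3 (A j) (B j) (C j))" for r
      using that U5_neq_short_sum_kron3 not_less_eq_eq by fastforce
  qed
qed

end
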